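(* Let ancillae $A_1,\dots,A_n$ consecutively measure a $d$-dimensional prepared quantum system $Q$. Let $S(Q:A_n)$ be the mutual entropy of $Q$ and $A_n$ in the unamplified state, and let $S(Q:D_n)$ be the mutual entropy of $Q$ and $D_n$ after the measurements have been amplified by detectors $D_1,\dots,D_n$. Then $$S(Q:D_n)\le S(Q:A_n).$$
   Context: $Q$ is $d$-dimensional, initially in $|Q\rangle=\sum_{x_1}\alpha^{(1)}_{x_1}|\widetilde{x}_1\rangle$. Ancilla $A_i$ ($d$-dimensional, basis $\{|x\rangle\}$, initially $|0\rangle$) measures $Q$ in the orthonormal basis $\{|\widetilde{x}_i\rangle\}$ via the unitary $\sum_x|\widetilde{x}_i\rangle\langle\widetilde{x}_i|\otimes U_x$, $U_x|0\rangle=|x\rangle$; with $U^{(i)}_{x_{i-1}x_i}=\langle\widetilde{x}_i|\widetilde{x}_{i-1}\rangle$, the unamplified state after $n$ consecutive measurements is $\sum_{x_1,\dots,x_n}\alpha^{(1)}_{x_1}U^{(2)}_{x_1x_2}\cdots U^{(n)}_{x_{n-1}x_n}|\widetilde{x}_n\rangle_Q|x_1\rangle_{A_1}\cdots|x_n\rangle_{A_n}$. Amplification: each detector $D_i$ (initially $|0\rangle$) copies $A_i$, $|x\rangle_{A_i}|0\rangle_{D_i}\mapsto|x\rangle_{A_i}|x\rangle_{D_i}$. Entropies are von Neumann (log base $d$) of reduced states; $S(X:Y)=S(X)+S(Y)-S(XY)$. *)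

theory Defs
  imports Complex_Main "Jordan_Normal_Form.Char_Poly"
begin

text \<open>A composite system of m subsystems, each d-dimensional. A (pure) state is a function
giving the amplitude of each configuration.\<close>

definition confs :: "nat \<Rightarrow> nat \<Rightarrow> nat list set" where
  "confs d m = {xs. length xs = m \<and> (\<forall>x\<in>set xs. x < d)}"

text \<open>Encoding of a sub-configuration as a matrix index (base-d digits).\<close>
fun enc :: "nat \<Rightarrow> nat list \<Rightarrow> nat" where
  "enc d [] = 0"
| "enc d (x # xs) = x + d * enc d xs"

text \<open>Reduced density matrix on the subsystems listed (distinct, < m) in ks,
obtained from the pure state psi of m d-dimensional subsystems by tracing out all
other subsystems.\<close>
definition reduced_dm ::
  "nat \<Rightarrow> nat \<Rightarrow> (nat list \<Rightarrow> complex) \<Rightarrow> nat list \<Rightarrow> complex mat" where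
  "reduced_dm d m psi ks =
     mat (d ^ length ks) (d ^ length ks)
       (\<lambda>(i, j). \<Sum>xs\<in>confs d m. \<Sum>ys\<in>confs d m.
          if enc d (map (nth xs) ks) = i \<and> enc d (map (nth ys) ks) = j \<and>
             (\<forall>l<m. l \<notin> set ks \<longrightarrow> xs ! l = ys ! l)
          then psi xs * cnj (psi ys) else 0)"

text \<open>Von Neumann entropy with logarithm base d: -\<Sum> \<lambda> log_d \<lambda> over the eigenvalues
(roots of the characteristic polynomial, counted with multiplicity), 0 log 0 = 0.\<close>
definition entr :: "real \<Rightarrow> real \<Rightarrow> real" where
  "entr b t = (if t \<le> 0 then 0 else - t * log b t)"

definition vn_entropy :: "nat \<Rightarrow> complex mat \<Rightarrow> real" where
  "vn_entropy d r =
     (\<Sum>z\<in>{z. poly (char_poly r) z = 0}.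
        real (order z (char_poly r)) * entr (real d) (Re z))"

definition mutual_entropy ::
  "nat \<Rightarrow> nat \<Rightarrow> (nat list \<Rightarrow> complex) \<Rightarrow> nat list \<Rightarrow> nat list \<Rightarrow> real" where
  "mutual_entropy d m psi X Y =
     vn_entropy d (reduced_dm d m psi X) + vn_entropy d (reduced_dm d m psi Y)
     - vn_entropy d (reduced_dm d m psi (X @ Y))"

text \<open>Setting: b i x is the vector |x~_i> (components b i x q, q < d) of the i-th
measurement basis; alpha are the coefficients of the initial state of Q in basis 1.
U i x y = <y~_i | x~_{i-1}>.\<close>
definition Umat :: "nat \<Rightarrow> (nat \<Rightarrow> nat \<Rightarrow> nat \<Rightarrow> complex) \<Rightarrow> nat \<Rightarrow> nat \<Rightarrow> nat \<Rightarrow> complex" where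
  "Umat d b i x y = (\<Sum>q<d. cnj (b i y q) * b (i - 1) x q)"

text \<open>Unamplified state after n measurements: subsystem 0 is Q (computational basis),
subsystem i (1 \<le> i \<le> n) is ancilla A_i. Configuration q # xs with xs = [x_1,...,x_n].\<close>
definition unamp_state ::
  "nat \<Rightarrow> nat \<Rightarrow> (nat \<Rightarrow> complex) \<Rightarrow> (nat \<Rightarrow> nat \<Rightarrow> nat \<Rightarrow> complex) \<Rightarrow> nat list \<Rightarrow> complex" where
  "unamp_state d n alpha b c =
     (case c of [] \<Rightarrow> 0
      | q # xs \<Rightarrow> alpha (xs ! 0) *
          (\<Prod>i\<in>{2..n}. Umat d b i (xs ! (i - 2)) (xs ! (i - 1))) * b n (xs ! (n - 1)) q)"

text \<open>Amplified state: subsystems 0 = Q, 1..n = A_1..A_n, n+1..2n = D_1..D_n, where each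
detector D_i (initially |0>) has copied A_i.\<close>
definition amp_state ::
  "nat \<Rightarrow> nat \<Rightarrow> (nat \<Rightarrow> complex) \<Rightarrow> (nat \<Rightarrow> nat \<Rightarrow> nat \<Rightarrow> complex) \<Rightarrow> nat list \<Rightarrow> complex" where
  "amp_state d n alpha b c =
     (if drop (n + 1) c = take n (drop 1 c)
      then unamp_state d n alpha b (take (n + 1) c) else 0)"

end

theory Submission
  imports Defs "Jordan_Normal_Form.Schur_Decomposition"
begin

text \<open>The detectors copy the ancillae, so the marginals are unchanged: \<open>\<rho>\<^sub>Q\<close> trivially, and
  \<open>\<rho>\<^bsub>D\<^sub>n\<^esub> = \<rho>\<^bsub>A\<^sub>n\<^esub>\<close> because branches that agree on \<open>A\<^sub>1, \<dots>, A\<^bsub>n-1\<^esub>\<close> but not on \<open>A\<^sub>n\<close> leave \<open>Q\<close>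
  in orthogonal states of the last basis \<open>|b\<^sub>x\<rangle>\<close>. Jointly,
  \<open>\<rho>\<^bsub>QA\<^sub>n\<^esub> = \<Sum>\<^sub>x\<^sub>y G\<^sub>x\<^sub>y |b\<^sub>x\<rangle>\<langle>b\<^sub>y| \<otimes> |x\<rangle>\<langle>y|\<close>, whereas amplification keeps only the terms \<open>x = y\<close>
  in \<open>\<rho>\<^bsub>QD\<^sub>n\<^esub>\<close>. One unitary carries these to \<open>|0\<rangle>\<langle>0| \<otimes> G\<close> and to its diagonal part, and
  dephasing never lowers the von Neumann entropy: the diagonal of a positive matrix is its
  spectrum averaged by a doubly stochastic matrix, and \<open>t ln t\<close> is convex. Hence
  \<open>S(QD\<^sub>n) \<ge> S(QA\<^sub>n)\<close>, while \<open>S(Q)\<close> and \<open>S(D\<^sub>n) = S(A\<^sub>n)\<close> are unchanged.\<close>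

section \<open>Unitary matrices and the spectral theorem\<close>

lemma mat_adjoint_complex:
  "mat_adjoint (M :: complex mat) = mat (dim_col M) (dim_row M) (\<lambda>(i,j). cnj (M $$ (j,i)))"
  by (rule eq_matI) (auto simp: mat_adjoint_def mat_of_rows_index conjugate_complex_def)

lemma mat_adjoint_carrier [simp]:
  "(M :: complex mat) \<in> carrier_mat a b \<Longrightarrow> mat_adjoint M \<in> carrier_mat b a"
  by (auto simp: mat_adjoint_complex)

lemma dim_mat_adjoint [simp]:
  "dim_row (mat_adjoint (M :: complex mat)) = dim_col M"
  "dim_col (mat_adjoint (M :: complex mat)) = dim_row M"
  by (auto simp: mat_adjoint_complex)

lemma index_mat_adjoint [simp]:
  "i < dim_col M \<Longrightarrow> j < dim_row M \<Longrightarrow> mat_adjoint (M :: complex mat) $$ (i,j) = cnj (M $$ (j,i))"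
  by (auto simp: mat_adjoint_complex)

lemma mat_adjoint_mat_adjoint [simp]: "mat_adjoint (mat_adjoint (M :: complex mat)) = M"
  by (rule eq_matI) auto

lemma mat_adjoint_one [simp]: "mat_adjoint (1\<^sub>m n :: complex mat) = 1\<^sub>m n"
  by (rule eq_matI) auto

lemma index_mult_mat_sum:
  "A \<in> carrier_mat n k \<Longrightarrow> B \<in> carrier_mat k m \<Longrightarrow> i < n \<Longrightarrow> j < m \<Longrightarrow>
   (A * B) $$ (i,j) = (\<Sum>l<k. A $$ (i,l) * B $$ (l,j))"
  by (auto simp: scalar_prod_def atLeast0LessThan)

lemma mat_adjoint_mult:
  fixes A B :: "complex mat"
  assumes A: "A \<in> carrier_mat n k" and B: "B \<in> carrier_mat k m"
  shows "mat_adjoint (A * B) = mat_adjoint B * mat_adjoint A"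
proof (rule eq_matI)
  fix i j assume "i < dim_row (mat_adjoint B * mat_adjoint A)" "j < dim_col (mat_adjoint B * mat_adjoint A)"
  with A B have i: "i < m" and j: "j < n" by auto
  have "mat_adjoint (A * B) $$ (i,j) = cnj ((A * B) $$ (j,i))" using A B i j by simp
  also have "\<dots> = (\<Sum>l<k. cnj (A $$ (j,l)) * cnj (B $$ (l,i)))"
    using A B i j by (simp add: index_mult_mat_sum[OF A B] cnj_sum del: index_mult_mat)
  also have "\<dots> = (mat_adjoint B * mat_adjoint A) $$ (i,j)"
    using A B i j by (simp add: index_mult_mat_sum[of "mat_adjoint B" m k "mat_adjoint A" n]
        mult.commute del: index_mult_mat)
  finally show "mat_adjoint (A * B) $$ (i,j) = (mat_adjoint B * mat_adjoint A) $$ (i,j)" .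
qed (use A B in auto)

definition unitary_mat :: "nat \<Rightarrow> complex mat \<Rightarrow> bool" where
  "unitary_mat n U \<longleftrightarrow>
     U \<in> carrier_mat n n \<and> mat_adjoint U * U = 1\<^sub>m n \<and> U * mat_adjoint U = 1\<^sub>m n"

lemma unitary_matI:
  assumes "U \<in> carrier_mat n n" and "mat_adjoint U * U = 1\<^sub>m n"
  shows "unitary_mat n U"
  using assms mat_mult_left_right_inverse[of "mat_adjoint U" n U] unfolding unitary_mat_def by auto

lemma unitary_mat_carrier: "unitary_mat n U \<Longrightarrow> U \<in> carrier_mat n n"
  by (simp add: unitary_mat_def)

lemma unitary_mat_conj_cancel:
  assumes U: "unitary_mat n U" and X: "X \<in> carrier_mat n n"
  shows "U * (mat_adjoint U * X * U) * mat_adjoint U = X"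
    and "mat_adjoint U * (U * X * mat_adjoint U) * U = X"
proof -
  have Uc: "U \<in> carrier_mat n n" and aU: "mat_adjoint U \<in> carrier_mat n n"
    using U by (auto simp: unitary_mat_def)
  have UU: "mat_adjoint U * U = 1\<^sub>m n" "U * mat_adjoint U = 1\<^sub>m n"
    using U by (auto simp: unitary_mat_def)
  have cancel: "V * (mat_adjoint V * X * V) * mat_adjoint V = X"
    if V: "V \<in> carrier_mat n n" and aV: "mat_adjoint V \<in> carrier_mat n n"
      and VV: "V * mat_adjoint V = 1\<^sub>m n" for V
  proof -
    have c: "mat_adjoint V * X \<in> carrier_mat n n" using aV X by simp
    have "V * (mat_adjoint V * X * V) * mat_adjoint V = V * (mat_adjoint V * X * (V * mat_adjoint V))"
      using assoc_mult_mat[OF V mult_carrier_mat[OF c V] aV] assoc_mult_mat[OF c V aV] by simp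
    also have "\<dots> = (V * mat_adjoint V) * X"
      using VV c right_mult_one_mat[OF c] assoc_mult_mat[OF V aV X] by simp
    also have "\<dots> = X" using VV X by simp
    finally show ?thesis .
  qed
  show "U * (mat_adjoint U * X * U) * mat_adjoint U = X" by (rule cancel[OF Uc aU UU(2)])
  show "mat_adjoint U * (U * X * mat_adjoint U) * U = X"
    using cancel[of "mat_adjoint U"] Uc aU UU(1) by simp
qed

lemma conj_mult_mat:
  fixes W E D :: "complex mat"
  assumes "W \<in> carrier_mat n n" "E \<in> carrier_mat n n" "D \<in> carrier_mat n n"
  shows "W * E * D * mat_adjoint (W * E) = W * (E * D * mat_adjoint E) * mat_adjoint W"
proof -
  have "W * E * D * mat_adjoint (W * E) = W * E * D * (mat_adjoint E * mat_adjoint W)"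
    using mat_adjoint_mult[OF assms(1,2)] by simp
  also have "\<dots> = W * (E * D) * mat_adjoint E * mat_adjoint W"
    using assms assoc_mult_mat[of "W * (E * D)" n n "mat_adjoint E" n "mat_adjoint W" n]
      assoc_mult_mat[of W n n E n D n] by simp
  also have "\<dots> = W * (E * D * mat_adjoint E) * mat_adjoint W"
    using assms assoc_mult_mat[of W n n "E * D" n "mat_adjoint E" n] by simp
  finally show ?thesis .
qed

lemma unitary_mat_mult:
  assumes "unitary_mat n U" "unitary_mat n W" shows "unitary_mat n (U * W)"
proof (rule unitary_matI)
  have U: "U \<in> carrier_mat n n" and W: "W \<in> carrier_mat n n" using assms unitary_mat_def by auto
  show "U * W \<in> carrier_mat n n" using U W by simp
  have "mat_adjoint (U * W) * (U * W) = mat_adjoint W * (mat_adjoint U * U * W)"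
    using U W by (simp add: mat_adjoint_mult assoc_mult_mat[of _ n n _ n _ n] mult_carrier_mat)
  also have "\<dots> = 1\<^sub>m n" using assms W by (simp add: unitary_mat_def)
  finally show "mat_adjoint (U * W) * (U * W) = 1\<^sub>m n" .
qed

lemma cscalar_prod_sum:
  "v \<in> carrier_vec n \<Longrightarrow> w \<in> carrier_vec n \<Longrightarrow> v \<bullet>c w = (\<Sum>k<n. v $ k * cnj (w $ k))"
  by (auto simp: scalar_prod_def atLeast0LessThan)

lemma cscalar_prod_self:
  "v \<in> carrier_vec n \<Longrightarrow> v \<bullet>c v = complex_of_real (\<Sum>k<n. (cmod (v $ k))\<^sup>2)"
  unfolding cscalar_prod_sum[of v n v] of_real_sum
  by (rule sum.cong, auto, metis complex_norm_square of_real_power)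

text \<open>Gram--Schmidt applied to a basis completion of \<open>v\<close> keeps \<open>v\<close> as its first vector;
  normalising the columns gives the unitary.\<close>

lemma unitary_mat_first_col:
  fixes v :: "complex vec"
  assumes v: "v \<in> carrier_vec n" and v0: "v \<noteq> 0\<^sub>v n"
  shows "\<exists>W c. unitary_mat n W \<and> c \<noteq> 0 \<and> (\<forall>i<n. W $$ (i,0) = c * v $ i)"
proof -
  interpret cof_vec_space n "TYPE(complex)" .
  define bs where "bs = basis_completion v"
  define ws where "ws = gram_schmidt n bs"
  from basis_completion[OF v v0, folded bs_def]
  have dist_bs: "distinct bs" and indep: "\<not> lin_dep (set bs)" and bs: "set bs \<subseteq> carrier_vec n"
    and hd_bs: "hd bs = v" and len_bs: "length bs = n" by auto
  from v0 v have n: "n \<noteq> 0" by auto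
  from hd_bs len_bs n obtain vs where bs_v: "bs = v # vs" by (cases bs) auto
  from gram_schmidt_result[OF bs dist_bs indep refl, folded ws_def]
  have ws: "set ws \<subseteq> carrier_vec n" "corthogonal ws" "length ws = n"
    by (auto simp: len_bs)
  from gram_schmidt_hd[OF v, of vs, folded bs_v] have "hd ws = v" unfolding ws_def .
  hence ws0: "ws ! 0 = v" using ws(3) n by (cases ws) auto
  have wsc: "\<And>j. j < n \<Longrightarrow> ws ! j \<in> carrier_vec n" using ws by auto
  define r where "r j = sqrt (\<Sum>k<n. (cmod (ws ! j $ k))\<^sup>2)" for j
  have rr: "complex_of_real (r j) * complex_of_real (r j) = ws ! j \<bullet>c ws ! j" if j: "j < n" for j
    unfolding cscalar_prod_self[OF wsc[OF j]] of_real_mult[symmetric] r_def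
    by (simp add: sum_nonneg)
  have rn0: "r j \<noteq> 0" if j: "j < n" for j
    using rr[OF j] corthogonalD[OF ws(2), of j j] ws(3) j by auto
  define W where "W = mat n n (\<lambda>(i,j). ws ! j $ i / complex_of_real (r j))"
  have Wc: "W \<in> carrier_mat n n" unfolding W_def by auto
  have "mat_adjoint W * W = 1\<^sub>m n"
  proof (rule eq_matI)
    fix i j assume "i < dim_row (1\<^sub>m n)" and "j < dim_col (1\<^sub>m n)"
    hence i: "i < n" and j: "j < n" by auto
    have "(mat_adjoint W * W) $$ (i,j) = (ws ! j \<bullet>c ws ! i) / (complex_of_real (r i) * complex_of_real (r j))"
      using i j Wc cscalar_prod_sum[OF wsc[OF j] wsc[OF i]]
      by (simp add: index_mult_mat_sum[of _ n n _ n] W_def sum_divide_distrib mult.commute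
          del: index_mult_mat)
    then show "(mat_adjoint W * W) $$ (i,j) = 1\<^sub>m n $$ (i,j)"
      using rr[OF i] rn0[OF i] corthogonalD[OF ws(2), of j i] ws(3) i j by auto
  qed (use Wc in auto)
  with Wc have "unitary_mat n W" by (rule unitary_matI)
  moreover have "\<forall>i<n. W $$ (i,0) = (1 / complex_of_real (r 0)) * v $ i"
    using n ws0 unfolding W_def by auto
  moreover have "1 / complex_of_real (r 0) \<noteq> 0" using rn0[of 0] n by auto
  ultimately show ?thesis by blast
qed

definition scalar_direct_sum :: "complex \<Rightarrow> complex mat \<Rightarrow> complex mat" where
  "scalar_direct_sum a X = mat (Suc (dim_row X)) (Suc (dim_col X))
     (\<lambda>(i,j). if i = 0 \<and> j = 0 then a else if i = 0 \<or> j = 0 then 0 else X $$ (i - 1, j - 1))"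

lemma scalar_direct_sum_carrier [simp]:
  "X \<in> carrier_mat m k \<Longrightarrow> scalar_direct_sum a X \<in> carrier_mat (Suc m) (Suc k)"
  by (auto simp: scalar_direct_sum_def)

lemma dim_scalar_direct_sum [simp]:
  "dim_row (scalar_direct_sum a X) = Suc (dim_row X)"
  "dim_col (scalar_direct_sum a X) = Suc (dim_col X)"
  by (auto simp: scalar_direct_sum_def)

lemma index_scalar_direct_sum:
  "i < Suc (dim_row X) \<Longrightarrow> j < Suc (dim_col X) \<Longrightarrow> scalar_direct_sum a X $$ (i,j) =
     (if i = 0 \<and> j = 0 then a else if i = 0 \<or> j = 0 then 0 else X $$ (i - 1, j - 1))"
  by (auto simp: scalar_direct_sum_def)

lemma index_scalar_direct_sum_simps [simp]:
  "scalar_direct_sum a X $$ (0,0) = a"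
  "j < dim_col X \<Longrightarrow> scalar_direct_sum a X $$ (0, Suc j) = 0"
  "i < dim_row X \<Longrightarrow> scalar_direct_sum a X $$ (Suc i, 0) = 0"
  "i < dim_row X \<Longrightarrow> j < dim_col X \<Longrightarrow> scalar_direct_sum a X $$ (Suc i, Suc j) = X $$ (i,j)"
  by (simp_all add: scalar_direct_sum_def)

lemma scalar_direct_sum_mult:
  assumes X: "X \<in> carrier_mat m k" and Y: "Y \<in> carrier_mat k l"
  shows "scalar_direct_sum a X * scalar_direct_sum b Y = scalar_direct_sum (a * b) (X * Y)"
proof (rule eq_matI)
  fix i j assume "i < dim_row (scalar_direct_sum (a * b) (X * Y))"
    and "j < dim_col (scalar_direct_sum (a * b) (X * Y))"
  with X Y have i: "i < Suc m" and j: "j < Suc l" by auto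
  have dims: "dim_row X = m" "dim_col X = k" "dim_row Y = k" "dim_col Y = l" using X Y by auto
  have "(scalar_direct_sum a X * scalar_direct_sum b Y) $$ (i,j) =
      (\<Sum>p<Suc k. scalar_direct_sum a X $$ (i,p) * scalar_direct_sum b Y $$ (p,j))"
    using i j X Y by (intro index_mult_mat_sum) auto
  also have "\<dots> = scalar_direct_sum a X $$ (i,0) * scalar_direct_sum b Y $$ (0,j)
      + (\<Sum>p<k. scalar_direct_sum a X $$ (i, Suc p) * scalar_direct_sum b Y $$ (Suc p, j))"
    by (rule sum.lessThan_Suc_shift)
  also have "\<dots> = scalar_direct_sum (a * b) (X * Y) $$ (i,j)"
  proof (cases i)
    case 0
    then show ?thesis using j by (cases j) (auto simp: dims)
  next
    case (Suc i')
    with i have i': "i' < m" by simp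
    show ?thesis
    proof (cases j)
      case 0
      then show ?thesis using Suc i' by (simp add: dims)
    next
      case (Suc j')
      with j have j': "j' < l" by simp
      have "scalar_direct_sum (a * b) (X * Y) $$ (Suc i', Suc j') = (X * Y) $$ (i', j')"
        using i' j' dims by (intro index_scalar_direct_sum_simps(4)) auto
      with \<open>i = Suc i'\<close> Suc i' j' show ?thesis
        by (simp add: dims index_mult_mat_sum[OF X Y] del: index_mult_mat)
    qed
  qed
  finally show "(scalar_direct_sum a X * scalar_direct_sum b Y) $$ (i,j) =
      scalar_direct_sum (a * b) (X * Y) $$ (i,j)" .
qed (use X Y in auto)

lemma mat_adjoint_scalar_direct_sum:
  "mat_adjoint (scalar_direct_sum a X) = scalar_direct_sum (cnj a) (mat_adjoint X)"
  by (rule eq_matI) (auto simp: index_scalar_direct_sum)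

lemma scalar_direct_sum_one: "scalar_direct_sum 1 (1\<^sub>m m) = 1\<^sub>m (Suc m)"
  by (rule eq_matI) (auto simp: index_scalar_direct_sum)

lemma unitary_mat_scalar_direct_sum:
  assumes U: "unitary_mat m U"
  shows "unitary_mat (Suc m) (scalar_direct_sum 1 U)"
proof (rule unitary_matI)
  have Uc: "U \<in> carrier_mat m m" using U by (rule unitary_mat_carrier)
  then show "scalar_direct_sum 1 U \<in> carrier_mat (Suc m) (Suc m)" by simp
  have "mat_adjoint (scalar_direct_sum 1 U) * scalar_direct_sum 1 U =
      scalar_direct_sum 1 (mat_adjoint U * U)"
    unfolding mat_adjoint_scalar_direct_sum using scalar_direct_sum_mult[of "mat_adjoint U" m m U m] Uc
    by simp
  then show "mat_adjoint (scalar_direct_sum 1 U) * scalar_direct_sum 1 U = 1\<^sub>m (Suc m)"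
    using U by (simp add: unitary_mat_def scalar_direct_sum_one)
qed

lemma diagonal_mat_scalar_direct_sum:
  "diagonal_mat D \<Longrightarrow> diagonal_mat (scalar_direct_sum a D)"
  unfolding diagonal_mat_def
  by (auto simp: index_scalar_direct_sum)

lemma scalar_direct_sum_conj:
  assumes U: "U \<in> carrier_mat m m" and D: "D \<in> carrier_mat m m"
  shows "scalar_direct_sum a (U * D * mat_adjoint U) =
    scalar_direct_sum 1 U * scalar_direct_sum a D * mat_adjoint (scalar_direct_sum 1 U)"
  using U D by (simp add: mat_adjoint_scalar_direct_sum scalar_direct_sum_mult[of _ m m _ m])

lemma unitary_deflation:
  assumes A: "A \<in> carrier_mat n n" and ev: "eigenvalue A e"
  shows "\<exists>W. unitary_mat n W \<and>
    (\<forall>i<n. (mat_adjoint W * A * W) $$ (i,0) = (if i = 0 then e else 0))"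
proof -
  define v where "v = find_eigenvector A e"
  from find_eigenvector[OF A ev] have "eigenvector A v e" unfolding v_def .
  hence v: "v \<in> carrier_vec n" and v0: "v \<noteq> 0\<^sub>v n" and Av: "A *\<^sub>v v = e \<cdot>\<^sub>v v"
    unfolding eigenvector_def using A by auto
  obtain W c where uW: "unitary_mat n W" and Wv: "\<forall>i<n. W $$ (i,0) = c * v $ i"
    using unitary_mat_first_col[OF v v0] by auto
  have W: "W \<in> carrier_mat n n" and aW: "mat_adjoint W \<in> carrier_mat n n"
    and WW: "mat_adjoint W * W = 1\<^sub>m n"
    using uW unfolding unitary_mat_def by auto
  have n: "n > 0" using v0 v by (cases n) auto
  have AW0: "(A * W) $$ (k,0) = e * W $$ (k,0)" if k: "k < n" for k
  proof -
    have "(A * W) $$ (k,0) = c * (\<Sum>l<n. A $$ (k,l) * v $ l)"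
      using k A W n Wv by (simp add: index_mult_mat_sum[OF A W] sum_distrib_left mult.left_commute
          del: index_mult_mat)
    also have "(\<Sum>l<n. A $$ (k,l) * v $ l) = (A *\<^sub>v v) $ k"
      using k A v by (auto simp: scalar_prod_def atLeast0LessThan)
    finally show ?thesis using Av k v Wv by simp
  qed
  have "(mat_adjoint W * A * W) $$ (i,0) = (if i = 0 then e else 0)" if i: "i < n" for i
  proof -
    have "(mat_adjoint W * A * W) $$ (i,0) = (\<Sum>k<n. mat_adjoint W $$ (i,k) * (A * W) $$ (k,0))"
      using i n A W assoc_mult_mat[OF aW A W]
      by (simp add: index_mult_mat_sum[of _ n n _ n] del: index_mult_mat)
    also have "\<dots> = e * (mat_adjoint W * W) $$ (i,0)"
      using i n W AW0 by (simp add: index_mult_mat_sum[OF aW W] sum_distrib_left mult.left_commute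
          del: index_mult_mat)
    finally show ?thesis using WW i n by simp
  qed
  with uW show ?thesis by blast
qed

lemma hermitian_scalar_direct_sum:
  assumes A: "A \<in> carrier_mat (Suc m) (Suc m)" and hA: "mat_adjoint A = A"
    and col0: "\<And>i. 0 < i \<Longrightarrow> i < Suc m \<Longrightarrow> A $$ (i,0) = 0"
  obtains X where "X \<in> carrier_mat m m" "mat_adjoint X = X" "A = scalar_direct_sum (A $$ (0,0)) X"
proof
  define X where "X = mat m m (\<lambda>(i,j). A $$ (Suc i, Suc j))"
  show Xc: "X \<in> carrier_mat m m" unfolding X_def by auto
  have entry: "cnj (A $$ (j,i)) = A $$ (i,j)" if "i < Suc m" "j < Suc m" for i j
    using that A index_mat_adjoint[of i A j] hA by auto
  show "mat_adjoint X = X"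
    by (rule eq_matI) (auto simp: X_def entry)
  have row0: "A $$ (0,j) = 0" if "0 < j" "j < Suc m" for j
    using entry[of 0 j] col0[OF that] that by auto
  show "A = scalar_direct_sum (A $$ (0,0)) X"
    by (rule eq_matI) (use A Xc row0 col0 in \<open>auto simp: index_scalar_direct_sum X_def\<close>)
qed

theorem hermitian_unitary_diagonalization:
  "A \<in> carrier_mat n n \<Longrightarrow> mat_adjoint A = A \<Longrightarrow>
   \<exists>U D. unitary_mat n U \<and> D \<in> carrier_mat n n \<and> diagonal_mat D \<and> A = U * D * mat_adjoint U"
proof (induction n arbitrary: A)
  case 0
  then have "A = 1\<^sub>m 0 * A * mat_adjoint (1\<^sub>m 0)" and "diagonal_mat A"
    by (auto simp: diagonal_mat_def)
  moreover have "unitary_mat 0 (1\<^sub>m 0)" by (simp add: unitary_mat_def)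
  ultimately show ?case using 0 by blast
next
  case (Suc m)
  have A: "A \<in> carrier_mat (Suc m) (Suc m)" by (rule Suc.prems(1))
  obtain es where "char_poly A = (\<Prod>a\<leftarrow>es. [:- a, 1:])" and "length es = Suc m"
    using char_poly_factorized[OF A] by auto
  then obtain e es' where "char_poly A = [:- e, 1:] * (\<Prod>a\<leftarrow>es'. [:- a, 1:])"
    by (cases es) auto
  hence "eigenvalue A e" using eigenvalue_root_char_poly[OF A] by auto
  then obtain W where uW: "unitary_mat (Suc m) W"
    and col0: "\<forall>i<Suc m. (mat_adjoint W * A * W) $$ (i,0) = (if i = 0 then e else 0)"
    using unitary_deflation[OF A] by blast
  define A' where "A' = mat_adjoint W * A * W"
  have W: "W \<in> carrier_mat (Suc m) (Suc m)" using uW by (rule unitary_mat_carrier)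
  have A'c: "A' \<in> carrier_mat (Suc m) (Suc m)" using A W unfolding A'_def by auto
  have "mat_adjoint A' = mat_adjoint W * mat_adjoint (mat_adjoint W * A)"
    unfolding A'_def using mat_adjoint_mult[OF mult_carrier_mat[OF mat_adjoint_carrier[OF W] A] W] .
  also have "\<dots> = A'"
    unfolding A'_def using Suc.prems(2) mat_adjoint_mult[OF mat_adjoint_carrier[OF W] A]
      assoc_mult_mat[OF mat_adjoint_carrier[OF W] A W] by simp
  finally have "mat_adjoint A' = A'" .
  then obtain X where Xc: "X \<in> carrier_mat m m" and hX: "mat_adjoint X = X"
    and A'X: "A' = scalar_direct_sum (A' $$ (0,0)) X"
    using hermitian_scalar_direct_sum[OF A'c] col0 unfolding A'_def by auto
  obtain U D where uU: "unitary_mat m U" and D: "D \<in> carrier_mat m m" and dD: "diagonal_mat D"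
    and XU: "X = U * D * mat_adjoint U"
    using Suc.IH[OF Xc hX] by auto
  define E where "E = scalar_direct_sum 1 U"
  define D' where "D' = scalar_direct_sum (A' $$ (0,0)) D"
  have uE: "unitary_mat (Suc m) E"
    unfolding E_def by (rule unitary_mat_scalar_direct_sum[OF uU])
  have D'c: "D' \<in> carrier_mat (Suc m) (Suc m)" unfolding D'_def using D by simp
  have "A' = scalar_direct_sum (A' $$ (0,0)) (U * D * mat_adjoint U)"
    using A'X XU by simp
  also have "\<dots> = E * D' * mat_adjoint E"
    unfolding E_def D'_def by (rule scalar_direct_sum_conj[OF unitary_mat_carrier[OF uU] D])
  finally have "A = W * (E * D' * mat_adjoint E) * mat_adjoint W"
    using unitary_mat_conj_cancel(1)[OF uW A] unfolding A'_def by simp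
  also have "\<dots> = (W * E) * D' * mat_adjoint (W * E)"
    using conj_mult_mat[OF W unitary_mat_carrier[OF uE] D'c] by simp
  finally show ?case
    using unitary_mat_mult[OF uW uE] D'c diagonal_mat_scalar_direct_sum[OF dD] unfolding D'_def
    by blast
qed

section \<open>Von Neumann entropy and dephasing\<close>

definition xlnx :: "real \<Rightarrow> real" where
  "xlnx t = (if t \<le> 0 then 0 else t * ln t)"

lemma entr_eq_xlnx: "entr b t = - xlnx t / ln b"
  by (simp add: entr_def xlnx_def log_def)

lemma xlnx_ge_tangent:
  assumes p: "p > 0" and l: "l \<ge> 0"
  shows "xlnx l \<ge> l * ln p + (l - p)"
proof (cases "l = 0")
  case True then show ?thesis using p by (simp add: xlnx_def)
next
  case False
  hence l0: "l > 0" using l by simp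
  have "ln p - ln l \<le> p / l - 1"
    using ln_le_minus_one[of "p / l"] ln_div[of p l] p l0 by simp
  hence "l * (ln p - ln l) \<le> l * (p / l - 1)" using l0 by (intro mult_left_mono) auto
  then show ?thesis using l0 by (simp add: xlnx_def algebra_simps)
qed

lemma sum_xlnx_doubly_stochastic_le:
  fixes w :: "nat \<Rightarrow> nat \<Rightarrow> real" and l :: "nat \<Rightarrow> real"
  assumes w0: "\<And>i j. i < n \<Longrightarrow> j < n \<Longrightarrow> w i j \<ge> 0"
    and row: "\<And>i. i < n \<Longrightarrow> (\<Sum>j<n. w i j) = 1"
    and col: "\<And>j. j < n \<Longrightarrow> (\<Sum>i<n. w i j) = 1"
    and l0: "\<And>j. j < n \<Longrightarrow> l j \<ge> 0"
  shows "(\<Sum>i<n. xlnx (\<Sum>j<n. w i j * l j)) \<le> (\<Sum>j<n. xlnx (l j))"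
proof -
  have Jensen: "xlnx (\<Sum>j<n. w i j * l j) \<le> (\<Sum>j<n. w i j * xlnx (l j))" if i: "i < n" for i
  proof -
    define p where "p = (\<Sum>j<n. w i j * l j)"
    have nn: "\<And>j. j \<in> {..<n} \<Longrightarrow> w i j * l j \<ge> 0" using w0 l0 i by auto
    show ?thesis
    proof (cases "p > 0")
      case True
      have "p * ln p = p * ln p + (p - p * (\<Sum>j<n. w i j))" using row[OF i] by simp
      also have "\<dots> = (\<Sum>j<n. (w i j * l j) * ln p + (w i j * l j - p * w i j))"
        unfolding sum.distrib sum_subtractf sum_distrib_left sum_distrib_right p_def ..
      also have "\<dots> = (\<Sum>j<n. w i j * (l j * ln p + (l j - p)))"
        by (rule sum.cong) (auto simp: algebra_simps)
      also have "\<dots> \<le> (\<Sum>j<n. w i j * xlnx (l j))"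
        using xlnx_ge_tangent[OF True l0] w0[OF i] by (intro sum_mono mult_left_mono) auto
      finally show ?thesis using True unfolding p_def by (simp add: xlnx_def)
    next
      case False
      have "p \<ge> 0" unfolding p_def by (rule sum_nonneg) (rule nn)
      with False have "p = 0" by simp
      hence "\<forall>j\<in>{..<n}. w i j * l j = 0"
        using sum_nonneg_eq_0_iff[of "{..<n}" "\<lambda>j. w i j * l j"] nn unfolding p_def by simp
      hence "(\<Sum>j<n. w i j * xlnx (l j)) = 0" by (intro sum.neutral) (auto simp: xlnx_def)
      then show ?thesis using \<open>p = 0\<close> unfolding p_def by (simp add: xlnx_def)
    qed
  qed
  have "(\<Sum>i<n. xlnx (\<Sum>j<n. w i j * l j)) \<le> (\<Sum>i<n. \<Sum>j<n. w i j * xlnx (l j))"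
    by (rule sum_mono) (simp add: Jensen)
  also have "\<dots> = (\<Sum>j<n. (\<Sum>i<n. w i j) * xlnx (l j))"
    unfolding sum_distrib_right by (rule sum.swap)
  also have "\<dots> = (\<Sum>j<n. xlnx (l j))" using col by simp
  finally show ?thesis .
qed

lemma order_prod_linear:
  "Polynomial.order z (\<Prod>a\<leftarrow>es. [:- a, 1:]) = count_list es (z :: complex)"
proof (induction es)
  case (Cons a es)
  have "monic (\<Prod>a\<leftarrow>a # es. [:- a, 1:] :: complex poly)" by (rule monic_prod_list) auto
  then have "[:- a, 1:] * (\<Prod>a\<leftarrow>es. [:- a, 1:]) \<noteq> (0 :: complex poly)" by fastforce
  then have "Polynomial.order z ([:- a, 1:] * (\<Prod>a\<leftarrow>es. [:- a, 1:])) =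
        Polynomial.order z [:- a, 1:] + Polynomial.order z (\<Prod>a\<leftarrow>es. [:- a, 1:])"
    by (rule order_mult)
  then show ?case using Cons by (simp add: order_linear')
qed (simp add: order_0I)

lemma sum_list_map_eq_sum_count_of_nat:
  "sum_list (map (f :: 'a \<Rightarrow> 'b :: semiring_1) xs) = (\<Sum>x\<in>set xs. of_nat (count_list xs x) * f x)"
proof (induction xs)
  case (Cons x xs)
  show ?case
  proof (cases "x \<in> set xs")
    case True
    have "(\<Sum>y\<in>set (x # xs). of_nat (count_list (x # xs) y) * f y) =
          (\<Sum>y\<in>set xs. of_nat (count_list xs y) * f y + (if y = x then f x else 0))"
      using True by (intro sum.cong) (auto simp: algebra_simps insert_absorb)
    with True Cons.IH show ?thesis by (simp add: sum.distrib add.commute)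
  next
    case False
    hence "\<And>y. y \<in> set xs \<Longrightarrow> x \<noteq> y" by blast
    thus ?thesis using False by (simp add: Cons.IH)
  qed
qed simp

lemma vn_entropy_char_poly_linear:
  assumes "char_poly A = (\<Prod>a\<leftarrow>es. [:- a, 1:])"
  shows "vn_entropy d A = (\<Sum>a\<leftarrow>es. entr (real d) (Re a))"
  unfolding vn_entropy_def assms order_prod_linear poly_prod_list_zero_iff
  by (simp add: sum_list_map_eq_sum_count_of_nat)

lemma vn_entropy_diagonal_mat:
  assumes D: "D \<in> carrier_mat n n" and dD: "diagonal_mat D"
  shows "vn_entropy d D = (\<Sum>i<n. entr (real d) (Re (D $$ (i,i))))"
proof -
  have "upper_triangular D" using dD D unfolding diagonal_mat_def upper_triangular_def by auto
  from vn_entropy_char_poly_linear[OF char_poly_upper_triangular[OF D this]] D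
  show ?thesis
    by (simp add: diag_mat_def interv_sum_list_conv_sum_set_nat atLeast0LessThan comp_def)
qed

lemma vn_entropy_unitary_conj:
  assumes U: "unitary_mat n U" and B: "B \<in> carrier_mat n n"
  shows "vn_entropy d (U * B * mat_adjoint U) = vn_entropy d B"
proof -
  have "similar_mat_wit (U * B * mat_adjoint U) B U (mat_adjoint U)"
    using U B unitary_mat_carrier[OF U] by (intro similar_mat_witI[of _ _ n]) (auto simp: unitary_mat_def)
  hence "char_poly (U * B * mat_adjoint U) = char_poly B"
    by (intro char_poly_similar) (auto simp: similar_mat_def)
  thus ?thesis unfolding vn_entropy_def by simp
qed

lemma index_mult_mat_adjoint_diag:
  assumes N: "N \<in> carrier_mat n k" and j: "j < n"
  shows "(N * mat_adjoint N) $$ (j,j) = complex_of_real (\<Sum>l<k. (cmod (N $$ (j,l)))\<^sup>2)"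
proof -
  have "(N * mat_adjoint N) $$ (j,j) = (\<Sum>l<k. N $$ (j,l) * mat_adjoint N $$ (l,j))"
    by (rule index_mult_mat_sum[OF N mat_adjoint_carrier[OF N] j j])
  also have "\<dots> = (\<Sum>l<k. complex_of_real ((cmod (N $$ (j,l)))\<^sup>2))"
    using N j by (intro sum.cong, auto, metis complex_norm_square of_real_power)
  finally show ?thesis by (simp add: of_real_sum)
qed

lemma index_unitary_conj_diagonal_mat:
  assumes U: "U \<in> carrier_mat n n" and D: "D \<in> carrier_mat n n" and dD: "diagonal_mat D"
    and i: "i < n"
  shows "(U * D * mat_adjoint U) $$ (i,i) =
    (\<Sum>k<n. complex_of_real ((cmod (U $$ (i,k)))\<^sup>2) * D $$ (k,k))"
proof -
  have UD: "(U * D) $$ (i,k) = U $$ (i,k) * D $$ (k,k)" if k: "k < n" for k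
  proof -
    have "(U * D) $$ (i,k) = (\<Sum>j<n. if j = k then U $$ (i,k) * D $$ (k,k) else 0)"
      unfolding index_mult_mat_sum[OF U D i k]
      using dD D k unfolding diagonal_mat_def by (intro sum.cong) auto
    with k show ?thesis by simp
  qed
  have "(U * D * mat_adjoint U) $$ (i,i) = (\<Sum>k<n. (U * D) $$ (i,k) * mat_adjoint U $$ (k,i))"
    by (rule index_mult_mat_sum[OF mult_carrier_mat[OF U D] mat_adjoint_carrier[OF U] i i])
  also have "\<dots> = (\<Sum>k<n. complex_of_real ((cmod (U $$ (i,k)))\<^sup>2) * D $$ (k,k))"
  proof (rule sum.cong)
    fix k assume "k \<in> {..<n}"
    with UD U i have "(U * D) $$ (i,k) * mat_adjoint U $$ (k,i) = (U $$ (i,k) * cnj (U $$ (i,k))) * D $$ (k,k)"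
      by simp
    then show "(U * D) $$ (i,k) * mat_adjoint U $$ (k,i) = complex_of_real ((cmod (U $$ (i,k)))\<^sup>2) * D $$ (k,k)"
      by (metis complex_norm_square of_real_power)
  qed simp
  finally show ?thesis .
qed

text \<open>The diagonal of \<open>A\<close> is its spectrum averaged by the doubly stochastic matrix
  \<open>|U\<^sub>i\<^sub>k|\<^sup>2\<close> of a diagonalising unitary \<open>U\<close>.\<close>

lemma vn_entropy_le_diagonal_part:
  assumes M: "M \<in> carrier_mat n k" and A: "A = M * mat_adjoint M"
    and B: "B \<in> carrier_mat n n" and dB: "diagonal_mat B" and BA: "\<forall>i<n. B $$ (i,i) = A $$ (i,i)"
    and d: "d \<ge> 2"
  shows "vn_entropy d A \<le> vn_entropy d B"
proof -
  have aM: "mat_adjoint M \<in> carrier_mat k n" using M by simp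
  have Ac: "A \<in> carrier_mat n n" unfolding A using M by simp
  have "mat_adjoint A = A" unfolding A using mat_adjoint_mult[OF M aM] by simp
  then obtain U D where uU: "unitary_mat n U" and D: "D \<in> carrier_mat n n" and dD: "diagonal_mat D"
    and AU: "A = U * D * mat_adjoint U"
    using hermitian_unitary_diagonalization[OF Ac] by auto
  have U: "U \<in> carrier_mat n n" and UU: "mat_adjoint U * U = 1\<^sub>m n" "U * mat_adjoint U = 1\<^sub>m n"
    using uU unitary_mat_def by auto
  have aU: "mat_adjoint U \<in> carrier_mat n n" using U by simp
  define N where "N = mat_adjoint U * M"
  have Nc: "N \<in> carrier_mat n k" unfolding N_def using aU M by simp
  have DN: "D = N * mat_adjoint N"
  proof -
    have "N * mat_adjoint N = mat_adjoint U * A * U"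
      unfolding N_def A using mat_adjoint_mult[OF aU M] assoc_mult_mat[OF aU M mult_carrier_mat[OF aM U]]
        assoc_mult_mat[OF M aM U] assoc_mult_mat[OF aU mult_carrier_mat[OF M aM] U] by simp
    also have "\<dots> = D" unfolding AU by (rule unitary_mat_conj_cancel(2)[OF uU D])
    finally show ?thesis by simp
  qed
  define l where "l j = Re (D $$ (j,j))" for j
  define w where "w i j = (cmod (U $$ (i,j)))\<^sup>2" for i j
  have l0: "l j \<ge> 0" if "j < n" for j
    unfolding l_def DN index_mult_mat_adjoint_diag[OF Nc that] by (simp add: sum_nonneg)
  have diagA: "Re (A $$ (i,i)) = (\<Sum>j<n. w i j * l j)" if i: "i < n" for i
    unfolding AU index_unitary_conj_diagonal_mat[OF U D dD i] w_def l_def Re_sum by simp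
  have row: "(\<Sum>j<n. w i j) = 1" if i: "i < n" for i
    using index_mult_mat_adjoint_diag[OF U i] UU(2) i unfolding w_def
    by (metis index_one_mat(1) of_real_eq_1_iff)
  have col: "(\<Sum>i<n. w i j) = 1" if j: "j < n" for j
  proof -
    have "complex_of_real (\<Sum>i<n. w i j) = (mat_adjoint U * mat_adjoint (mat_adjoint U)) $$ (j,j)"
      unfolding index_mult_mat_adjoint_diag[OF aU j] w_def using U j by (intro arg_cong[of _ _ of_real] sum.cong) auto
    thus ?thesis using UU(1) j by (metis mat_adjoint_mat_adjoint index_one_mat(1) of_real_eq_1_iff)
  qed
  have ln_d: "ln (real d) > 0" using d by simp
  have "vn_entropy d A = vn_entropy d D" unfolding AU by (rule vn_entropy_unitary_conj[OF uU D])
  also have "\<dots> = - (\<Sum>j<n. xlnx (l j)) / ln (real d)"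
    unfolding vn_entropy_diagonal_mat[OF D dD] l_def entr_eq_xlnx
    by (simp add: sum_divide_distrib sum_negf)
  also have "\<dots> \<le> - (\<Sum>i<n. xlnx (\<Sum>j<n. w i j * l j)) / ln (real d)"
    using sum_xlnx_doubly_stochastic_le[of n w l] row col l0 ln_d
    by (auto simp: w_def intro: divide_right_mono)
  also have "\<dots> = vn_entropy d B"
    unfolding vn_entropy_diagonal_mat[OF B dB] entr_eq_xlnx using BA diagA
    by (simp add: sum_divide_distrib sum_negf)
  finally show ?thesis .
qed

lemma vn_entropy_trivial_base: "d \<le> 1 \<Longrightarrow> vn_entropy d X = 0"
  by (cases d) (auto simp: vn_entropy_def entr_def log_def)

section \<open>Configurations and reduced density matrices\<close>

lemma finite_confs [simp]: "finite (confs d m)"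
proof -
  have "confs d m = {xs. set xs \<subseteq> {..<d} \<and> length xs = m}" unfolding confs_def by auto
  then show ?thesis by (simp add: finite_lists_length_eq)
qed

lemma confs_length: "xs \<in> confs d m \<Longrightarrow> length xs = m"
  by (simp add: confs_def)

lemma confs_nth_less: "xs \<in> confs d m \<Longrightarrow> k < m \<Longrightarrow> xs ! k < d"
  by (auto simp: confs_def)

lemma sum_confs_Cons:
  "(\<Sum>c\<in>confs d (Suc m). f c) = (\<Sum>q<d. \<Sum>us\<in>confs d m. f (q # us))"
proof -
  have img: "confs d (Suc m) = (\<lambda>(q,us). q # us) ` ({..<d} \<times> confs d m)"
  proof (intro equalityI subsetI)
    fix xs assume xs: "xs \<in> confs d (Suc m)"
    then obtain q us where "xs = q # us" unfolding confs_def by (cases xs) auto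
    with xs show "xs \<in> (\<lambda>(q,us). q # us) ` ({..<d} \<times> confs d m)" unfolding confs_def by force
  qed (auto simp: confs_def)
  have "inj_on (\<lambda>(q,us). q # us) ({..<d} \<times> confs d m)" by (auto simp: inj_on_def)
  then show ?thesis
    unfolding img by (simp add: sum.reindex sum.cartesian_product split_def)
qed

lemma sum_confs_append:
  "(\<Sum>c\<in>confs d (a + b). f c) = (\<Sum>us\<in>confs d a. \<Sum>ws\<in>confs d b. f (us @ ws))"
proof -
  have img: "confs d (a + b) = (\<lambda>(us,ws). us @ ws) ` (confs d a \<times> confs d b)"
  proof (intro equalityI subsetI)
    fix xs assume xs: "xs \<in> confs d (a + b)"
    have "(take a xs, drop a xs) \<in> confs d a \<times> confs d b"
      using xs unfolding confs_def by (auto dest: in_set_takeD in_set_dropD)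
    then show "xs \<in> (\<lambda>(us,ws). us @ ws) ` (confs d a \<times> confs d b)"
      by (metis (no_types, lifting) append_take_drop_id case_prod_conv image_eqI)
  qed (auto simp: confs_def)
  have "inj_on (\<lambda>(us,ws). us @ ws) (confs d a \<times> confs d b)"
    by (auto simp: inj_on_def confs_def)
  then show ?thesis
    unfolding img by (simp add: sum.reindex sum.cartesian_product split_def)
qed

lemma reduced_dm_carrier [simp]:
  "reduced_dm d m psi ks \<in> carrier_mat (d ^ length ks) (d ^ length ks)"
  by (simp add: reduced_dm_def)

lemma dim_reduced_dm [simp]:
  "dim_row (reduced_dm d m psi ks) = d ^ length ks" "dim_col (reduced_dm d m psi ks) = d ^ length ks"
  by (simp_all add: reduced_dm_def)

lemma index_reduced_dm:
  "i < d ^ length ks \<Longrightarrow> j < d ^ length ks \<Longrightarrow> reduced_dm d m psi ks $$ (i,j) =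
    (\<Sum>xs\<in>confs d m. \<Sum>ys\<in>confs d m.
       if enc d (map (nth xs) ks) = i \<and> enc d (map (nth ys) ks) = j \<and>
          (\<forall>l<m. l \<notin> set ks \<longrightarrow> xs ! l = ys ! l)
       then psi xs * cnj (psi ys) else 0)"
  by (simp add: reduced_dm_def)

text \<open>The columns of \<open>M\<close> are indexed by the configurations of the traced-out subsystems.\<close>

lemma reduced_dm_gram:
  "\<exists>k M. M \<in> carrier_mat (d ^ length ks) k \<and> reduced_dm d m psi ks = M * mat_adjoint M"
proof -
  define key where "key xs = (\<lambda>l. if l < m \<and> l \<notin> set ks then xs ! l else (0::nat))" for xs :: "nat list"
  define en where "en xs = enc d (map (nth xs) ks)" for xs
  define K where "K = key ` confs d m"
  have fK: "finite K" unfolding K_def by simp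
  obtain h where h: "bij_betw h {0..<card K} K" using ex_bij_betw_nat_finite[OF fK] by auto
  define F where "F i \<kappa> = (\<Sum>xs\<in>confs d m. if en xs = i \<and> key xs = \<kappa> then psi xs else 0)" for i \<kappa>
  define M where "M = mat (d ^ length ks) (card K) (\<lambda>(i,r). F i (h r))"
  have Mc: "M \<in> carrier_mat (d ^ length ks) (card K)" unfolding M_def by simp
  have key_eq: "(\<forall>l<m. l \<notin> set ks \<longrightarrow> xs ! l = ys ! l) \<longleftrightarrow> key xs = key ys" for xs ys
    unfolding key_def by (auto simp: fun_eq_iff)
  have single_key: "(\<Sum>\<kappa>\<in>K. if en xs = i \<and> en ys = j \<and> key xs = \<kappa> \<and> key ys = \<kappa>
        then psi xs * cnj (psi ys) else 0) =
      (if en xs = i \<and> en ys = j \<and> key xs = key ys then psi xs * cnj (psi ys) else 0)"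
    if "xs \<in> confs d m" for i j xs ys
  proof (cases "en xs = i \<and> en ys = j \<and> key xs = key ys")
    case True
    have "key xs \<in> K" using that unfolding K_def by simp
    with True fK show ?thesis by (auto simp: sum.delta' intro: sum.cong)
  qed (auto intro!: sum.neutral)
  have "reduced_dm d m psi ks = M * mat_adjoint M"
  proof (rule eq_matI)
    fix i j assume "i < dim_row (M * mat_adjoint M)" "j < dim_col (M * mat_adjoint M)"
    hence i: "i < d ^ length ks" and j: "j < d ^ length ks" using Mc by auto
    have "(M * mat_adjoint M) $$ (i,j) = (\<Sum>r\<in>{0..<card K}. F i (h r) * cnj (F j (h r)))"
      unfolding index_mult_mat_sum[OF Mc mat_adjoint_carrier[OF Mc] i j]
      using i j Mc by (intro sum.cong) (auto simp: M_def)
    also have "\<dots> = (\<Sum>\<kappa>\<in>K. F i \<kappa> * cnj (F j \<kappa>))"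
      using sum.reindex_bij_betw[OF h, of "\<lambda>\<kappa>. F i \<kappa> * cnj (F j \<kappa>)"] by simp
    also have "\<dots> = (\<Sum>xs\<in>confs d m. \<Sum>ys\<in>confs d m. \<Sum>\<kappa>\<in>K.
        if en xs = i \<and> en ys = j \<and> key xs = \<kappa> \<and> key ys = \<kappa> then psi xs * cnj (psi ys) else 0)"
      unfolding F_def cnj_sum sum_product
      by (subst sum.swap, subst (2) sum.swap, intro sum.cong refl) auto
    also have "\<dots> = (\<Sum>xs\<in>confs d m. \<Sum>ys\<in>confs d m.
        if en xs = i \<and> en ys = j \<and> key xs = key ys then psi xs * cnj (psi ys) else 0)"
      by (intro sum.cong refl single_key)
    also have "\<dots> = reduced_dm d m psi ks $$ (i,j)"
      using i j by (simp add: index_reduced_dm en_def key_eq)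
    finally show "reduced_dm d m psi ks $$ (i,j) = (M * mat_adjoint M) $$ (i,j)" by simp
  qed (use Mc in \<open>auto simp: reduced_dm_def\<close>)
  with Mc show ?thesis by blast
qed

lemma less_mult_digits:
  assumes "(q :: nat) < d" and "x < d" shows "q + d * x < d * d"
proof -
  have "q + d * x < d * Suc x" using assms(1) by simp
  also have "\<dots> \<le> d * d" using assms(2) by (intro mult_le_mono2) simp
  finally show ?thesis .
qed

lemma sum_lessThan_mult_digits:
  assumes d: "(d :: nat) > 0"
  shows "(\<Sum>i<d*d. f i) = (\<Sum>x<d. \<Sum>q<d. f (q + d * x))"
proof -
  have bij: "bij_betw (\<lambda>(q,x). q + d * x) ({..<d} \<times> {..<d}) {..<d*d}"
    by (rule bij_betw_byWitness[where f' = "\<lambda>i. (i mod d, i div d)"])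
       (use d in \<open>auto simp: less_mult_digits less_mult_imp_div_less\<close>)
  have "(\<Sum>i<d*d. f i) = (\<Sum>p\<in>{..<d} \<times> {..<d}. f (case p of (q,x) \<Rightarrow> q + d * x))"
    using sum.reindex_bij_betw[OF bij, of f] by (simp add: case_prod_beta)
  also have "\<dots> = (\<Sum>q<d. \<Sum>x<d. f (q + d * x))"
    by (simp add: sum.cartesian_product split_def)
  also have "\<dots> = (\<Sum>x<d. \<Sum>q<d. f (q + d * x))" by (rule sum.swap)
  finally show ?thesis .
qed

lemma sum_lessThan_delta2:
  fixes d :: nat
  assumes "a < d" "c < d"
  shows "(\<Sum>q<d. \<Sum>q'<d. if q = a \<and> q' = c then f q q' else 0) = f a c"
proof -
  have "(\<Sum>q<d. \<Sum>q'<d. if q = a \<and> q' = c then f q q' else 0) =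
      (\<Sum>q<d. if q = a then (\<Sum>q'<d. if q' = c then f q q' else 0) else 0)"
    by (intro sum.cong) auto
  with assms show ?thesis by simp
qed

section \<open>Reduced states of the measurement model\<close>

definition branch_amp ::
  "nat \<Rightarrow> nat \<Rightarrow> (nat \<Rightarrow> complex) \<Rightarrow> (nat \<Rightarrow> nat \<Rightarrow> nat \<Rightarrow> complex) \<Rightarrow> nat list \<Rightarrow> complex" where
  "branch_amp d n alpha b us = alpha (us ! 0) * (\<Prod>i\<in>{2..n}. Umat d b i (us ! (i - 2)) (us ! (i - 1)))"

lemma unamp_state_Cons:
  "unamp_state d n alpha b (q # us) = branch_amp d n alpha b us * b n (us ! (n - 1)) q"
  by (simp add: unamp_state_def branch_amp_def)

lemma amp_state_Cons_append:
  "length us = n \<Longrightarrow>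
   amp_state d n alpha b (q # us @ ws) = (if ws = us then unamp_state d n alpha b (q # us) else 0)"
  by (simp add: amp_state_def)

lemma sum_confs_amp_state:
  assumes f0: "\<And>x. f 0 x = 0"
  shows "(\<Sum>c\<in>confs d (2*n+1). f (amp_state d n alpha b c) c) =
         (\<Sum>q<d. \<Sum>us\<in>confs d n. f (unamp_state d n alpha b (q # us)) (q # us @ us))"
proof -
  have "(\<Sum>c\<in>confs d (2*n+1). f (amp_state d n alpha b c) c) =
        (\<Sum>q<d. \<Sum>us\<in>confs d n. \<Sum>ws\<in>confs d n. f (amp_state d n alpha b (q # us @ ws)) (q # us @ ws))"
    using sum_confs_Cons[where d=d and m="n+n"] by (simp add: mult_2 sum_confs_append)
  also have "\<dots> = (\<Sum>q<d. \<Sum>us\<in>confs d n. f (unamp_state d n alpha b (q # us)) (q # us @ us))"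
  proof (intro sum.cong refl)
    fix q us assume us: "us \<in> confs d n"
    have "(\<Sum>ws\<in>confs d n. f (amp_state d n alpha b (q # us @ ws)) (q # us @ ws)) =
          (\<Sum>ws\<in>confs d n. if ws = us then f (unamp_state d n alpha b (q # us)) (q # us @ us) else 0)"
      by (intro sum.cong refl) (auto simp: amp_state_Cons_append[OF confs_length[OF us]] f0)
    also have "\<dots> = f (unamp_state d n alpha b (q # us)) (q # us @ us)" using us by simp
    finally show "(\<Sum>ws\<in>confs d n. f (amp_state d n alpha b (q # us @ ws)) (q # us @ ws)) =
          f (unamp_state d n alpha b (q # us)) (q # us @ us)" .
  qed
  finally show ?thesis .
qed

definition pair_sum :: "nat \<Rightarrow> nat \<Rightarrow> (nat \<Rightarrow> complex) \<Rightarrow> (nat \<Rightarrow> nat \<Rightarrow> nat \<Rightarrow> complex) \<Rightarrow>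
   (nat \<Rightarrow> nat list \<Rightarrow> nat \<Rightarrow> nat list \<Rightarrow> bool) \<Rightarrow> complex" where
  "pair_sum d n alpha b P = (\<Sum>q<d. \<Sum>us\<in>confs d n. \<Sum>q'<d. \<Sum>vs\<in>confs d n.
      if P q us q' vs then unamp_state d n alpha b (q # us) * cnj (unamp_state d n alpha b (q' # vs))
      else 0)"

lemma pair_sum_cong:
  assumes "\<And>q us q' vs. q < d \<Longrightarrow> us \<in> confs d n \<Longrightarrow> q' < d \<Longrightarrow> vs \<in> confs d n \<Longrightarrow>
     P q us q' vs = P' q us q' vs"
  shows "pair_sum d n alpha b P = pair_sum d n alpha b P'"
  unfolding pair_sum_def using assms by (intro sum.cong refl) auto

lemma pair_sum_swap:
  "pair_sum d n alpha b P = (\<Sum>us\<in>confs d n. \<Sum>vs\<in>confs d n. \<Sum>q<d. \<Sum>q'<d.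
      if P q us q' vs then unamp_state d n alpha b (q # us) * cnj (unamp_state d n alpha b (q' # vs))
      else 0)"
  unfolding pair_sum_def
  by (subst sum.swap, subst (1 2) sum.swap, rule sum.cong[OF refl], subst sum.swap, rule sum.cong[OF refl],
      subst sum.swap, rule refl)

lemma index_reduced_dm_amp_state:
  assumes i: "i < d ^ length ks" and j: "j < d ^ length ks"
  shows "reduced_dm d (2*n+1) (amp_state d n alpha b) ks $$ (i,j) =
    pair_sum d n alpha b (\<lambda>q us q' vs.
      enc d (map (nth (q # us @ us)) ks) = i \<and> enc d (map (nth (q' # vs @ vs)) ks) = j \<and>
      (\<forall>l<2*n+1. l \<notin> set ks \<longrightarrow> (q # us @ us) ! l = (q' # vs @ vs) ! l))"
proof -
  define C where "C xs ys \<longleftrightarrow> enc d (map (nth xs) ks) = i \<and> enc d (map (nth ys) ks) = j \<and>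
             (\<forall>l<2*n+1. l \<notin> set ks \<longrightarrow> xs ! l = ys ! l)" for xs ys
  let ?pa = "amp_state d n alpha b" and ?pu = "unamp_state d n alpha b"
  have "reduced_dm d (2*n+1) ?pa ks $$ (i,j) =
     (\<Sum>xs\<in>confs d (2*n+1). \<Sum>ys\<in>confs d (2*n+1). if C xs ys then ?pa xs * cnj (?pa ys) else 0)"
    unfolding index_reduced_dm[OF i j] C_def ..
  also have "\<dots> = (\<Sum>xs\<in>confs d (2*n+1). \<Sum>q'<d. \<Sum>vs\<in>confs d n.
        if C xs (q' # vs @ vs) then ?pa xs * cnj (?pu (q' # vs)) else 0)"
    using sum_confs_amp_state[of "\<lambda>z ys. if C _ ys then ?pa _ * cnj z else 0" d n alpha b]
    by (intro sum.cong refl) simp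
  also have "\<dots> = (\<Sum>q<d. \<Sum>us\<in>confs d n. \<Sum>q'<d. \<Sum>vs\<in>confs d n.
        if C (q # us @ us) (q' # vs @ vs) then ?pu (q # us) * cnj (?pu (q' # vs)) else 0)"
    using sum_confs_amp_state[of "\<lambda>z xs. \<Sum>q'<d. \<Sum>vs\<in>confs d n.
        if C xs (q' # vs @ vs) then z * cnj (?pu (q' # vs)) else 0" d n alpha b]
    by simp
  finally show ?thesis unfolding pair_sum_def C_def .
qed

lemma index_reduced_dm_unamp_state:
  assumes i: "i < d ^ length ks" and j: "j < d ^ length ks"
  shows "reduced_dm d (n+1) (unamp_state d n alpha b) ks $$ (i,j) =
    pair_sum d n alpha b (\<lambda>q us q' vs.
      enc d (map (nth (q # us)) ks) = i \<and> enc d (map (nth (q' # vs)) ks) = j \<and>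
      (\<forall>l<n+1. l \<notin> set ks \<longrightarrow> (q # us) ! l = (q' # vs) ! l))"
  unfolding index_reduced_dm[OF i j] pair_sum_def
  by (simp add: sum_confs_Cons sum.swap[of _ "confs d (Suc n)"])

lemma amp_agree_except:
  assumes us: "length us = n" and vs: "length vs = n" and n: "n \<ge> 1" and ks: "set ks \<subseteq> {0, 2*n}"
  shows "(\<forall>l<2*n+1. l \<notin> set ks \<longrightarrow> (q # us @ us) ! l = (q' # vs @ vs) ! l) \<longleftrightarrow>
    (0 \<notin> set ks \<longrightarrow> q = q') \<and> us = vs"
proof
  assume H: "\<forall>l<2*n+1. l \<notin> set ks \<longrightarrow> (q # us @ us) ! l = (q' # vs @ vs) ! l"
  have "us ! k = vs ! k" if k: "k < n" for k
  proof -
    have "Suc k \<notin> set ks" using ks k n by auto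
    moreover have "Suc k < 2*n+1" using k by simp
    ultimately have "(q # us @ us) ! Suc k = (q' # vs @ vs) ! Suc k" using H by blast
    with k us vs show ?thesis by (simp add: nth_append)
  qed
  with us vs have "us = vs" by (simp add: list_eq_iff_nth_eq)
  moreover have "0 \<notin> set ks \<longrightarrow> q = q'" using H[rule_format, of 0] by simp
  ultimately show "(0 \<notin> set ks \<longrightarrow> q = q') \<and> us = vs" by blast
qed (auto simp: nth_Cons')

lemma unamp_agree_except:
  assumes us: "length us = n" and vs: "length vs = n" and n: "n \<ge> 1" and ks: "set ks \<subseteq> {0, n}"
  shows "(\<forall>l<n+1. l \<notin> set ks \<longrightarrow> (q # us) ! l = (q' # vs) ! l) \<longleftrightarrow>
    (0 \<notin> set ks \<longrightarrow> q = q') \<and> take (n - 1) us = take (n - 1) vs \<and>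
    (n \<notin> set ks \<longrightarrow> us ! (n - 1) = vs ! (n - 1))"
proof -
  have "(\<forall>l<n+1. l \<notin> set ks \<longrightarrow> (q # us) ! l = (q' # vs) ! l) \<longleftrightarrow>
      (0 \<notin> set ks \<longrightarrow> q = q') \<and> (\<forall>k<n. Suc k \<notin> set ks \<longrightarrow> us ! k = vs ! k)"
    by (auto simp: nth_Cons' less_Suc_eq_0_disj)
  also have "(\<forall>k<n. Suc k \<notin> set ks \<longrightarrow> us ! k = vs ! k) \<longleftrightarrow>
      (\<forall>k<n - 1. us ! k = vs ! k) \<and> (n \<notin> set ks \<longrightarrow> us ! (n - 1) = vs ! (n - 1))"
  proof -
    obtain m where m: "n = Suc m" using n by (cases n) auto
    have "\<And>k. k < m \<Longrightarrow> Suc k \<notin> set ks" using ks m by auto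
    then show ?thesis unfolding m by (auto simp: All_less_Suc)
  qed
  also have "(\<forall>k<n - 1. us ! k = vs ! k) \<longleftrightarrow> take (n - 1) us = take (n - 1) vs"
    using us vs by (simp add: list_eq_iff_nth_eq)
  finally show ?thesis .
qed

lemma eq_of_take_butlast_nth:
  assumes "length us = n" "length vs = n" "n \<ge> 1"
    and "take (n - 1) us = take (n - 1) vs" "us ! (n - 1) = vs ! (n - 1)"
  shows "us = vs"
proof -
  obtain m where m: "n = Suc m" using assms(3) by (cases n) auto
  have "us = take m us @ [us ! m]" "vs = take m vs @ [vs ! m]"
    using assms(1,2) m by (auto simp: take_Suc_conv_app_nth[symmetric])
  then show ?thesis using assms(4,5) m by (metis diff_Suc_1)
qed

lemma nth_Cons_append_self_double:
  "length us = n \<Longrightarrow> n \<ge> 1 \<Longrightarrow> (q # us @ us) ! (2*n) = us ! (n - 1)"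
  by (cases n) (auto simp: nth_append)

lemma nth_Cons_length:
  "length us = n \<Longrightarrow> n \<ge> 1 \<Longrightarrow> (q # us) ! n = us ! (n - 1)"
  by (cases n) auto

text \<open>With \<open>|b\<^sub>x\<rangle>\<close> the last measurement basis,
  \<open>\<rho>\<^bsub>QA\<^sub>n\<^esub> = \<Sum>\<^sub>x\<^sub>y last_ancilla_dm x y |b\<^sub>x\<rangle>\<langle>b\<^sub>y| \<otimes> |x\<rangle>\<langle>y|\<close>.\<close>

definition last_ancilla_dm ::
  "nat \<Rightarrow> nat \<Rightarrow> (nat \<Rightarrow> complex) \<Rightarrow> (nat \<Rightarrow> nat \<Rightarrow> nat \<Rightarrow> complex) \<Rightarrow> nat \<Rightarrow> nat \<Rightarrow> complex" where
  "last_ancilla_dm d n alpha b x y = (\<Sum>us\<in>confs d n. \<Sum>vs\<in>confs d n.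
     if us ! (n - 1) = x \<and> vs ! (n - 1) = y \<and> take (n - 1) us = take (n - 1) vs
     then branch_amp d n alpha b us * cnj (branch_amp d n alpha b vs) else 0)"

context
  fixes d n :: nat and alpha :: "nat \<Rightarrow> complex" and b :: "nat \<Rightarrow> nat \<Rightarrow> nat \<Rightarrow> complex"
  assumes n: "n \<ge> 1"
begin

lemma reduced_dm_amp_state_Q:
  "reduced_dm d (2*n+1) (amp_state d n alpha b) [0] = reduced_dm d (n+1) (unamp_state d n alpha b) [0]"
proof (rule eq_matI)
  fix i j assume "i < dim_row (reduced_dm d (n+1) (unamp_state d n alpha b) [0])"
    "j < dim_col (reduced_dm d (n+1) (unamp_state d n alpha b) [0])"
  hence i: "i < d ^ length [0::nat]" and j: "j < d ^ length [0::nat]" by auto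
  show "reduced_dm d (2*n+1) (amp_state d n alpha b) [0] $$ (i,j) =
      reduced_dm d (n+1) (unamp_state d n alpha b) [0] $$ (i,j)"
    unfolding index_reduced_dm_amp_state[OF i j] index_reduced_dm_unamp_state[OF i j]
  proof (rule pair_sum_cong, goal_cases)
    case (1 q us q' vs)
    hence us: "length us = n" and vs: "length vs = n" by (auto simp: confs_length)
    then show ?case
      using n amp_agree_except[OF us vs n, of "[0]"] unamp_agree_except[OF us vs n, of "[0]"]
        eq_of_take_butlast_nth[OF us vs n] by auto
  qed
qed auto

lemma reduced_dm_amp_state_detector:
  assumes orth: "\<And>x y. x < d \<Longrightarrow> y < d \<Longrightarrow>
      (\<Sum>q<d. cnj (b n x q) * b n y q) = (if x = y then 1 else 0)"
  shows "reduced_dm d (2*n+1) (amp_state d n alpha b) [2*n] = reduced_dm d (n+1) (unamp_state d n alpha b) [n]"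
proof (rule eq_matI)
  fix i j assume "i < dim_row (reduced_dm d (n+1) (unamp_state d n alpha b) [n])"
    "j < dim_col (reduced_dm d (n+1) (unamp_state d n alpha b) [n])"
  hence i: "i < d ^ length [n]" and j: "j < d ^ length [n]" by auto
  have i2: "i < d ^ length [2*n]" and j2: "j < d ^ length [2*n]" using i j by auto
  let ?pu = "unamp_state d n alpha b"
  let ?T = "\<lambda>q us q' vs. ?pu (q # us) * cnj (?pu (q' # vs))"
  have lengths: "length us = n" "length vs = n" if "us \<in> confs d n" "vs \<in> confs d n" for us vs
    using that by (auto simp: confs_length)
  have "reduced_dm d (2*n+1) (amp_state d n alpha b) [2*n] $$ (i,j) =
     pair_sum d n alpha b (\<lambda>q us q' vs. us ! (n - 1) = i \<and> vs ! (n - 1) = j \<and> q = q' \<and> us = vs)"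
    unfolding index_reduced_dm_amp_state[OF i2 j2]
  proof (rule pair_sum_cong, goal_cases)
    case (1 q us q' vs)
    with lengths have us: "length us = n" and vs: "length vs = n" by auto
    show ?case
      using amp_agree_except[OF us vs n, of "[2*n]"] n
      unfolding list.map enc.simps nth_Cons_append_self_double[OF us n] nth_Cons_append_self_double[OF vs n]
      by auto
  qed
  also have "\<dots> = pair_sum d n alpha b (\<lambda>q us q' vs. us ! (n - 1) = i \<and> vs ! (n - 1) = j \<and> q = q' \<and>
      take (n - 1) us = take (n - 1) vs)"
    unfolding pair_sum_swap
  proof (rule sum.cong[OF refl], rule sum.cong[OF refl])
    fix us vs assume us: "us \<in> confs d n" and vs: "vs \<in> confs d n"
    show "(\<Sum>q<d. \<Sum>q'<d. if us ! (n - 1) = i \<and> vs ! (n - 1) = j \<and> q = q' \<and> us = vs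
            then ?T q us q' vs else 0) =
          (\<Sum>q<d. \<Sum>q'<d. if us ! (n - 1) = i \<and> vs ! (n - 1) = j \<and> q = q' \<and>
            take (n - 1) us = take (n - 1) vs then ?T q us q' vs else 0)"
    proof (cases "us \<noteq> vs \<and> take (n - 1) us = take (n - 1) vs \<and> us ! (n - 1) = i \<and> vs ! (n - 1) = j")
      case True
      \<comment> \<open>Branches that differ only in the last ancilla carry orthogonal states of \<open>Q\<close>.\<close>
      have "us ! (n - 1) \<noteq> vs ! (n - 1)"
        using True eq_of_take_butlast_nth[OF lengths[OF us vs] n] by blast
      moreover have "us ! (n - 1) < d" "vs ! (n - 1) < d"
        using confs_nth_less[OF us] confs_nth_less[OF vs] n by auto
      ultimately have "(\<Sum>q<d. b n (us ! (n - 1)) q * cnj (b n (vs ! (n - 1)) q)) = 0"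
        using orth[of "vs ! (n - 1)" "us ! (n - 1)"] by (simp add: mult.commute)
      then have "(\<Sum>q<d. ?T q us q vs) = 0"
        unfolding unamp_state_Cons by (simp add: sum_distrib_left[symmetric] algebra_simps)
      then show ?thesis using True by (simp add: if_distrib)
    qed (auto intro!: sum.cong)
  qed
  also have "\<dots> = reduced_dm d (n+1) (unamp_state d n alpha b) [n] $$ (i,j)"
    unfolding index_reduced_dm_unamp_state[OF i j]
  proof (rule pair_sum_cong, goal_cases)
    case (1 q us q' vs)
    with lengths have us: "length us = n" and vs: "length vs = n" by auto
    show ?case
      using unamp_agree_except[OF us vs n, of "[n]"] n
      unfolding list.map enc.simps nth_Cons_length[OF us n] nth_Cons_length[OF vs n]
      by auto
  qed
  finally show "reduced_dm d (2*n+1) (amp_state d n alpha b) [2*n] $$ (i,j) =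
      reduced_dm d (n+1) (unamp_state d n alpha b) [n] $$ (i,j)" .
qed auto

lemma index_reduced_dm_unamp_state_Q_last:
  assumes i: "i < d * d" and j: "j < d * d"
  shows "reduced_dm d (n+1) (unamp_state d n alpha b) [0, n] $$ (i,j) =
    last_ancilla_dm d n alpha b (i div d) (j div d) *
      (b n (i div d) (i mod d) * cnj (b n (j div d) (j mod d)))"
proof -
  let ?pu = "unamp_state d n alpha b"
  let ?C = "\<lambda>us vs. us ! (n - 1) = i div d \<and> vs ! (n - 1) = j div d \<and> take (n - 1) us = take (n - 1) vs"
  have d: "d > 0" using i by (cases d) auto
  have i2: "i < d ^ length [0, n]" and j2: "j < d ^ length [0, n]" using i j by (auto simp: power2_eq_square)
  have digits: "q + d * x = k \<longleftrightarrow> q = k mod d \<and> x = k div d" if "q < d" for q x k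
    using that by auto
  have "reduced_dm d (n+1) ?pu [0, n] $$ (i,j) =
     pair_sum d n alpha b (\<lambda>q us q' vs. q = i mod d \<and> q' = j mod d \<and> ?C us vs)"
    unfolding index_reduced_dm_unamp_state[OF i2 j2]
  proof (rule pair_sum_cong, goal_cases)
    case (1 q us q' vs)
    then have us: "length us = n" and vs: "length vs = n" by (auto simp: confs_length)
    show ?case
      using unamp_agree_except[OF us vs n, of "[0, n]"] n 1 digits
      unfolding list.map enc.simps nth_Cons_length[OF us n] nth_Cons_length[OF vs n]
      by auto
  qed
  also have "\<dots> = (\<Sum>us\<in>confs d n. \<Sum>vs\<in>confs d n.
      if ?C us vs then ?pu (i mod d # us) * cnj (?pu (j mod d # vs)) else 0)"
    unfolding pair_sum_swap
  proof (rule sum.cong[OF refl], rule sum.cong[OF refl])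
    fix us vs
    have "i mod d < d" "j mod d < d" using d by auto
    then show "(\<Sum>q<d. \<Sum>q'<d. if q = i mod d \<and> q' = j mod d \<and> ?C us vs
          then ?pu (q # us) * cnj (?pu (q' # vs)) else 0) =
        (if ?C us vs then ?pu (i mod d # us) * cnj (?pu (j mod d # vs)) else 0)"
      by (cases "?C us vs"; auto simp: sum_lessThan_delta2 intro!: sum.neutral)
  qed
  also have "\<dots> = last_ancilla_dm d n alpha b (i div d) (j div d) *
      (b n (i div d) (i mod d) * cnj (b n (j div d) (j mod d)))"
    unfolding last_ancilla_dm_def sum_distrib_right
    by (intro sum.cong refl) (auto simp: unamp_state_Cons)
  finally show ?thesis .
qed

lemma index_reduced_dm_amp_state_Q_detector:
  assumes i: "i < d * d" and j: "j < d * d"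
  shows "reduced_dm d (2*n+1) (amp_state d n alpha b) [0, 2*n] $$ (i,j) =
    (if i div d = j div d then reduced_dm d (n+1) (unamp_state d n alpha b) [0, n] $$ (i,j) else 0)"
proof -
  have i2: "i < d ^ length [0, 2*n]" and j2: "j < d ^ length [0, 2*n]"
    and i1: "i < d ^ length [0, n]" and j1: "j < d ^ length [0, n]"
    using i j by (auto simp: power2_eq_square)
  have "reduced_dm d (2*n+1) (amp_state d n alpha b) [0, 2*n] $$ (i,j) =
    pair_sum d n alpha b (\<lambda>q us q' vs. i div d = j div d \<and> q + d * us ! (n - 1) = i \<and>
      q' + d * vs ! (n - 1) = j \<and> take (n - 1) us = take (n - 1) vs)"
    unfolding index_reduced_dm_amp_state[OF i2 j2]
  proof (rule pair_sum_cong, goal_cases)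
    case (1 q us q' vs)
    then have us: "length us = n" and vs: "length vs = n" by (auto simp: confs_length)
    have "q + d * us ! (n - 1) = i \<Longrightarrow> us ! (n - 1) = i div d"
      and "q' + d * vs ! (n - 1) = j \<Longrightarrow> vs ! (n - 1) = j div d" using 1 by auto
    then show ?case
      using amp_agree_except[OF us vs n, of "[0, 2*n]"] n eq_of_take_butlast_nth[OF us vs n]
      unfolding list.map enc.simps nth_Cons_append_self_double[OF us n]
        nth_Cons_append_self_double[OF vs n]
      by auto
  qed
  also have "\<dots> = (if i div d = j div d then reduced_dm d (n+1) (unamp_state d n alpha b) [0, n] $$ (i,j) else 0)"
  proof (cases "i div d = j div d")
    case True
    have "pair_sum d n alpha b (\<lambda>q us q' vs. i div d = j div d \<and> q + d * us ! (n - 1) = i \<and>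
        q' + d * vs ! (n - 1) = j \<and> take (n - 1) us = take (n - 1) vs) =
      reduced_dm d (n+1) (unamp_state d n alpha b) [0, n] $$ (i,j)"
      unfolding index_reduced_dm_unamp_state[OF i1 j1]
    proof (rule pair_sum_cong, goal_cases)
      case (1 q us q' vs)
      then have us: "length us = n" and vs: "length vs = n" by (auto simp: confs_length)
      show ?case
        using unamp_agree_except[OF us vs n, of "[0, n]"] n True
        unfolding list.map enc.simps nth_Cons_length[OF us n] nth_Cons_length[OF vs n]
        by auto
    qed
    with True show ?thesis by simp
  qed (simp add: pair_sum_def)
  finally show ?thesis .
qed
end

section \<open>Amplification as dephasing\<close>

text \<open>Matrices on two \<open>d\<close>-dimensional factors are indexed by \<open>q + d * x\<close>, with \<open>q\<close> the digit of
  the first factor. \<open>tensor_proj0 d G\<close> is \<open>|0\<rangle>\<langle>0| \<otimes> G\<close>; column \<open>k + d * x\<close> of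
  \<open>shift_basis_mat d \<beta>\<close> is \<open>\<beta>\<^bsub>(x + k) mod d\<^esub> \<otimes> |x\<rangle>\<close>.\<close>

definition tensor_proj0 :: "nat \<Rightarrow> (nat \<Rightarrow> nat \<Rightarrow> complex) \<Rightarrow> complex mat" where
  "tensor_proj0 d G = mat (d*d) (d*d)
     (\<lambda>(a,c). if a mod d = 0 \<and> c mod d = 0 then G (a div d) (c div d) else 0)"

definition shift_basis_mat :: "nat \<Rightarrow> (nat \<Rightarrow> nat \<Rightarrow> complex) \<Rightarrow> complex mat" where
  "shift_basis_mat d \<beta> = mat (d*d) (d*d)
     (\<lambda>(i,a). if i div d = a div d then \<beta> ((i div d + a mod d) mod d) (i mod d) else 0)"

lemma shift_basis_mat_carrier: "shift_basis_mat d \<beta> \<in> carrier_mat (d*d) (d*d)"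
  by (simp add: shift_basis_mat_def)

lemma index_shift_basis_mat:
  assumes "i < d * d" "k < d" "x < d"
  shows "shift_basis_mat d \<beta> $$ (i, k + d * x) =
    (if i div d = x then \<beta> ((x + k) mod d) (i mod d) else 0)"
  using assms less_mult_digits[OF assms(2,3)] by (simp add: shift_basis_mat_def)

lemma index_tensor_proj0:
  assumes "k < d" "x < d" "c < d * d"
  shows "tensor_proj0 d G $$ (k + d * x, c) = (if k = 0 \<and> c mod d = 0 then G x (c div d) else 0)"
  using assms less_mult_digits[OF assms(1,2)] by (simp add: tensor_proj0_def)

lemma diagonal_mat_tensor_proj0:
  assumes "\<And>x y. x \<noteq> y \<Longrightarrow> G x y = 0"
  shows "diagonal_mat (tensor_proj0 d G)"
proof -
  have "a div d \<noteq> c div d" if "a \<noteq> c" "a mod d = 0" "c mod d = 0" for a c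
    using that by (metis div_mult_mod_eq)
  then show ?thesis unfolding diagonal_mat_def tensor_proj0_def using assms by auto
qed

lemma mod_add_left_inj:
  assumes "(x :: nat) < d" "k < d" "k' < d" "(x + k) mod d = (x + k') mod d"
  shows "k = k'"
  using assms by (smt (verit) add.assoc add.commute canonically_ordered_monoid_add_class.lessE
      mod_add_right_eq mod_add_self1 mod_less)

lemma shift_basis_mat_unitary:
  assumes d: "d > 0"
    and orth: "\<And>x y. x < d \<Longrightarrow> y < d \<Longrightarrow> (\<Sum>q<d. cnj (\<beta> x q) * \<beta> y q) = (if x = y then 1 else 0)"
  shows "unitary_mat (d*d) (shift_basis_mat d \<beta>)"
proof (rule unitary_matI[OF shift_basis_mat_carrier], rule eq_matI)
  let ?V = "shift_basis_mat d \<beta>"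
  fix a c assume "a < dim_row (1\<^sub>m (d*d))" "c < dim_col (1\<^sub>m (d*d))"
  hence a: "a < d*d" and c: "c < d*d" by auto
  have ad: "a div d < d" "a mod d < d" and cd: "c div d < d" "c mod d < d"
    using a c d by (auto simp: less_mult_imp_div_less)
  have V: "?V $$ (q + d * x, e) = (if x = e div d then \<beta> ((x + e mod d) mod d) q else 0)"
    if "q < d" "x < d" "e < d * d" for q x e
    using that less_mult_digits[OF that(1,2)] by (simp add: shift_basis_mat_def)
  have "(mat_adjoint ?V * ?V) $$ (a,c) = (\<Sum>i<d*d. cnj (?V $$ (i,a)) * ?V $$ (i,c))"
    using index_mult_mat_sum[OF mat_adjoint_carrier[OF shift_basis_mat_carrier] shift_basis_mat_carrier a c]
      a c shift_basis_mat_carrier[of d \<beta>] by simp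
  also have "\<dots> = (\<Sum>x<d. \<Sum>q<d. cnj (?V $$ (q + d*x, a)) * ?V $$ (q + d*x, c))"
    by (rule sum_lessThan_mult_digits[OF d])
  also have "\<dots> = (\<Sum>x<d. if x = a div d \<and> x = c div d then
       (\<Sum>q<d. cnj (\<beta> ((x + a mod d) mod d) q) * \<beta> ((x + c mod d) mod d) q) else 0)"
    by (intro sum.cong refl) (auto simp: V a c)
  also have "\<dots> = (if a div d = c div d then
       (\<Sum>q<d. cnj (\<beta> ((a div d + a mod d) mod d) q) * \<beta> ((a div d + c mod d) mod d) q) else 0)"
    using ad by (cases "a div d = c div d") (auto intro!: sum.neutral)
  also have "\<dots> = (if a = c then 1 else 0)"
  proof (cases "a div d = c div d")
    case True
    have "(a = c) = (a mod d = c mod d)" using True by (metis div_mult_mod_eq)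
    with True show ?thesis
      using orth[of "(a div d + a mod d) mod d" "(a div d + c mod d) mod d"] d ad cd
        mod_add_left_inj[of "a div d" d "a mod d" "c mod d"] by auto
  qed auto
  finally show "(mat_adjoint ?V * ?V) $$ (a,c) = 1\<^sub>m (d*d) $$ (a,c)" using a c by simp
qed (auto simp: shift_basis_mat_def)

lemma mat_eq_shift_basis_conj_tensor_proj0:
  assumes d: "d > 0" and R: "R \<in> carrier_mat (d*d) (d*d)"
    and RG: "\<And>i j. i < d*d \<Longrightarrow> j < d*d \<Longrightarrow>
       R $$ (i,j) = G (i div d) (j div d) * (\<beta> (i div d) (i mod d) * cnj (\<beta> (j div d) (j mod d)))"
  shows "R = shift_basis_mat d \<beta> * tensor_proj0 d G * mat_adjoint (shift_basis_mat d \<beta>)"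
proof (rule eq_matI)
  let ?V = "shift_basis_mat d \<beta>" and ?L = "tensor_proj0 d G"
  have Vc: "?V \<in> carrier_mat (d*d) (d*d)" and Lc: "?L \<in> carrier_mat (d*d) (d*d)"
    by (simp_all add: shift_basis_mat_def tensor_proj0_def)
  have digits: "i div d < d" "i mod d < d" if "i < d * d" for i
    using that d by (auto simp: less_mult_imp_div_less)
  fix i j assume "i < dim_row (?V * ?L * mat_adjoint ?V)" "j < dim_col (?V * ?L * mat_adjoint ?V)"
  with Vc have i: "i < d*d" and j: "j < d*d" by auto
  have VL: "(?V * ?L) $$ (i,c) =
      \<beta> (i div d) (i mod d) * (if c mod d = 0 then G (i div d) (c div d) else 0)" if c: "c < d*d" for c
  proof -
    have "(?V * ?L) $$ (i,c) = (\<Sum>x<d. \<Sum>k<d. ?V $$ (i, k + d*x) * ?L $$ (k + d*x, c))"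
      unfolding index_mult_mat_sum[OF Vc Lc i c] by (rule sum_lessThan_mult_digits[OF d])
    also have "\<dots> = (\<Sum>x<d. \<Sum>k<d. if x = i div d \<and> k = 0 then
        \<beta> (i div d) (i mod d) * (if c mod d = 0 then G (i div d) (c div d) else 0) else 0)"
      using digits[OF i] by (intro sum.cong refl) (auto simp: index_shift_basis_mat index_tensor_proj0 i c)
    also have "\<dots> = \<beta> (i div d) (i mod d) * (if c mod d = 0 then G (i div d) (c div d) else 0)"
      using digits[OF i] d by (intro sum_lessThan_delta2) auto
    finally show ?thesis .
  qed
  have "(?V * ?L * mat_adjoint ?V) $$ (i,j) =
      (\<Sum>y<d. \<Sum>k<d. (?V * ?L) $$ (i, k + d*y) * cnj (?V $$ (j, k + d*y)))"
    unfolding index_mult_mat_sum[OF mult_carrier_mat[OF Vc Lc] mat_adjoint_carrier[OF Vc] i j]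
    using Vc j by (subst sum_lessThan_mult_digits[OF d]) (auto intro!: sum.cong simp: less_mult_digits)
  also have "\<dots> = (\<Sum>y<d. \<Sum>k<d. if y = j div d \<and> k = 0 then
      \<beta> (i div d) (i mod d) * G (i div d) (j div d) * cnj (\<beta> (j div d) (j mod d)) else 0)"
    using digits[OF j] by (intro sum.cong refl)
      (auto simp: VL less_mult_digits index_shift_basis_mat j)
  also have "\<dots> = R $$ (i,j)"
    using digits[OF j] d by (subst sum_lessThan_delta2) (auto simp: RG[OF i j] algebra_simps)
  finally show "R $$ (i,j) = (?V * ?L * mat_adjoint ?V) $$ (i,j)" ..
qed (use R in \<open>auto simp: shift_basis_mat_def tensor_proj0_def\<close>)

lemma vn_entropy_le_unitary_conj_diagonal_part:
  assumes uV: "unitary_mat m V" and A: "A \<in> carrier_mat m m"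
    and M: "M \<in> carrier_mat m k" and gram: "V * A * mat_adjoint V = M * mat_adjoint M"
    and B: "B \<in> carrier_mat m m" and dB: "diagonal_mat B" and BA: "\<forall>i<m. B $$ (i,i) = A $$ (i,i)"
    and d: "d \<ge> 2"
  shows "vn_entropy d (V * A * mat_adjoint V) \<le> vn_entropy d (V * B * mat_adjoint V)"
proof -
  have Vc: "V \<in> carrier_mat m m" using uV by (rule unitary_mat_carrier)
  have aV: "mat_adjoint V \<in> carrier_mat m m" and aM: "mat_adjoint M \<in> carrier_mat k m"
    using Vc M by simp_all
  have "A = mat_adjoint V * (M * mat_adjoint M) * V"
    using unitary_mat_conj_cancel(2)[OF uV A] gram by simp
  also have "\<dots> = (mat_adjoint V * M) * mat_adjoint (mat_adjoint V * M)"
    using mat_adjoint_mult[OF aV M] assoc_mult_mat[OF aV M mult_carrier_mat[OF aM Vc]]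
      assoc_mult_mat[OF M aM Vc] assoc_mult_mat[OF aV mult_carrier_mat[OF M aM] Vc] by simp
  finally have "vn_entropy d A \<le> vn_entropy d B"
    by (intro vn_entropy_le_diagonal_part[OF mult_carrier_mat[OF aV M] _ B dB BA d])
  then show ?thesis using vn_entropy_unitary_conj[OF uV A] vn_entropy_unitary_conj[OF uV B] by simp
qed

lemma vn_entropy_Q_ancilla_le_Q_detector:
  assumes n: "n \<ge> 1" and d: "d \<ge> 2"
    and orth: "\<And>x y. x < d \<Longrightarrow> y < d \<Longrightarrow>
      (\<Sum>q<d. cnj (b n x q) * b n y q) = (if x = y then 1 else 0)"
  shows "vn_entropy d (reduced_dm d (n+1) (unamp_state d n alpha b) [0, n])
     \<le> vn_entropy d (reduced_dm d (2*n+1) (amp_state d n alpha b) [0, 2*n])"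
proof -
  have d0: "d > 0" using d by simp
  define G where "G = last_ancilla_dm d n alpha b"
  define G' where "G' x y = (if x = y then G x y else 0)" for x y
  define V where "V = shift_basis_mat d (b n)"
  have dims: "d ^ length [0, n] = d * d" "d ^ length [0, 2*n] = d * d"
    by (simp_all add: power2_eq_square)
  have QA: "reduced_dm d (n+1) (unamp_state d n alpha b) [0, n] = V * tensor_proj0 d G * mat_adjoint V"
    unfolding V_def G_def
  proof (rule mat_eq_shift_basis_conj_tensor_proj0[OF d0])
    show "reduced_dm d (n+1) (unamp_state d n alpha b) [0, n] \<in> carrier_mat (d * d) (d * d)"
      using reduced_dm_carrier[of d "n+1" _ "[0, n]"] by (simp only: dims)
  qed (rule index_reduced_dm_unamp_state_Q_last[OF n])
  have QD: "reduced_dm d (2*n+1) (amp_state d n alpha b) [0, 2*n] = V * tensor_proj0 d G' * mat_adjoint V"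
    unfolding V_def G'_def G_def
  proof (rule mat_eq_shift_basis_conj_tensor_proj0[OF d0])
    show "reduced_dm d (2*n+1) (amp_state d n alpha b) [0, 2*n] \<in> carrier_mat (d * d) (d * d)"
      using reduced_dm_carrier[of d "2*n+1" _ "[0, 2*n]"] by (simp only: dims)
  qed (simp only: index_reduced_dm_amp_state_Q_detector[OF n] index_reduced_dm_unamp_state_Q_last[OF n],
      simp)
  obtain k M where "M \<in> carrier_mat (d ^ length [0, n]) k"
    and gram: "reduced_dm d (n+1) (unamp_state d n alpha b) [0, n] = M * mat_adjoint M"
    using reduced_dm_gram by blast
  then have M: "M \<in> carrier_mat (d * d) k" by (simp add: dims)
  have "vn_entropy d (V * tensor_proj0 d G * mat_adjoint V) \<le>
      vn_entropy d (V * tensor_proj0 d G' * mat_adjoint V)"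
    using gram QA
    by (intro vn_entropy_le_unitary_conj_diagonal_part[OF _ _ M _ _ diagonal_mat_tensor_proj0 _ d])
      (auto simp: V_def shift_basis_mat_unitary[OF d0 orth] tensor_proj0_def G'_def)
  then show ?thesis unfolding QA QD .
qed

theorem theorem4:
  fixes d n :: nat and alpha :: "nat \<Rightarrow> complex" and b :: "nat \<Rightarrow> nat \<Rightarrow> nat \<Rightarrow> complex"
  assumes "n \<ge> 1"
    and "\<And>i x y. i \<in> {1..n} \<Longrightarrow> x < d \<Longrightarrow> y < d \<Longrightarrow>
           (\<Sum>q<d. cnj (b i x q) * b i y q) = (if x = y then 1 else 0)"
    and "(\<Sum>x<d. (cmod (alpha x))\<^sup>2) = 1"
  shows "mutual_entropy d (2 * n + 1) (amp_state d n alpha b) [0] [2 * n]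
           \<le> mutual_entropy d (n + 1) (unamp_state d n alpha b) [0] [n]"
proof (cases "d \<le> 1")
  case True
  \<comment> \<open>Then \<open>ln d = 0\<close>, so every entropy in base \<open>d\<close> is \<open>0\<close>.\<close>
  then show ?thesis unfolding mutual_entropy_def by (simp add: vn_entropy_trivial_base)
next
  case False
  \<comment> \<open>Only the last basis needs to be orthonormal, and the state need not be normalised.\<close>
  have orth: "\<And>x y. x < d \<Longrightarrow> y < d \<Longrightarrow> (\<Sum>q<d. cnj (b n x q) * b n y q) = (if x = y then 1 else 0)"
    using assms(1,2) by simp
  show ?thesis
    unfolding mutual_entropy_def
    using reduced_dm_amp_state_Q[OF assms(1)]
      reduced_dm_amp_state_detector[where d=d and b=b and alpha=alpha, OF assms(1) orth]
      vn_entropy_Q_ancilla_le_Q_detector[where d=d and b=b and alpha=alpha, OF assms(1) _ orth] False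
    by simp
qed

end
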